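(* Let $\Phi=B_l$ with $l\ge2$, fix a system of positive roots $\Phi^+$, and let $\Delta$ be a nonempty subset of $\Phi^+$. Then there exist a long root $\alpha\in\Phi^+$ and a root $\beta\in\Delta$ such that $\alpha+\gamma\notin\Phi$ for all $\gamma\in\Delta$ and $(\alpha,\beta)\ne0$.
   Context: $(\cdot,\cdot)$ denotes the inner product of the Euclidean space containing the root system. *)

theory Defs
  imports "HOL-Analysis.Analysis"
begin

text \<open>The root system of type B_l realised in the Euclidean space real^'n, l = CARD('n):
  short roots \<pm>e_i, long roots \<pm>e_i \<pm> e_j (i \<noteq> j).\<close>

definition rootsB :: "(real^'n) set" where
  "rootsB = {v. \<exists>i. v = axis i 1 \<or> v = - axis i 1}
          \<union> {v. \<exists>i j s t. i \<noteq> j \<and> (s = 1 \<or> s = -1) \<and> (t = 1 \<or> t = -1)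
                         \<and> v = s *\<^sub>R axis i 1 + t *\<^sub>R axis j 1}"

definition long_rootB :: "real^'n \<Rightarrow> bool" where
  "long_rootB (v :: real^'n) \<longleftrightarrow> v \<in> rootsB \<and> (\<forall>u\<in>(rootsB :: (real^'n) set). u \<bullet> u \<le> v \<bullet> v)"

definition positive_systemB :: "(real^'n) set \<Rightarrow> bool" where
  "positive_systemB (P :: (real^'n) set) \<longleftrightarrow>
     (\<exists>w. (\<forall>a\<in>(rootsB :: (real^'n) set). a \<bullet> w \<noteq> 0) \<and> P = {a \<in> rootsB. a \<bullet> w > 0})"

end

theory Submission
  imports Defs
begin

text \<open>Among the positive long roots that are not orthogonal to \<open>\<Delta>\<close> (such roots exist), take one,
  \<open>\<alpha>\<close>, of maximal height. If \<open>\<alpha> + \<gamma>\<close> were a root for some \<open>\<gamma> \<in> \<Delta>\<close>, then \<open>(\<alpha>,\<gamma>) = -1\<close> and the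
  reflection \<open>\<alpha> + (2 / (\<gamma>,\<gamma>)) \<gamma>\<close> of \<open>\<alpha>\<close> in \<open>\<gamma>\<close> would be a long root of larger height with
  \<open>(\<alpha> + (2 / (\<gamma>,\<gamma>)) \<gamma>, \<gamma>) = 1\<close>, contradicting the maximality of \<open>\<alpha>\<close>.\<close>

lemma rootsB_cases:
  assumes "v \<in> (rootsB :: (real^'n) set)"
  obtains (short) i r where "r = 1 \<or> r = -1" "v = r *\<^sub>R axis i 1"
    | (long) i j s t where "i \<noteq> j" "s = 1 \<or> s = -1" "t = 1 \<or> t = -1"
        "v = s *\<^sub>R axis i 1 + t *\<^sub>R axis j 1"
proof -
  from assms consider (unit) i where "v = axis i 1 \<or> v = - axis i 1"
    | (pair) i j s t where "i \<noteq> j" "s = 1 \<or> s = -1" "t = 1 \<or> t = -1"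
        "v = s *\<^sub>R axis i 1 + t *\<^sub>R axis j 1"
    unfolding rootsB_def by blast
  then show thesis
  proof cases
    case (unit i)
    then have "v = 1 *\<^sub>R axis i 1 \<or> v = (-1) *\<^sub>R axis i 1" by simp
    then show thesis using short by blast
  next
    case (pair i j s t)
    then show thesis using long by blast
  qed
qed

lemma short_rootsB_mem: "r = 1 \<or> r = -1 \<Longrightarrow> r *\<^sub>R axis i 1 \<in> (rootsB :: (real^'n) set)"
  unfolding rootsB_def by auto

lemma long_rootsB_mem:
  "i \<noteq> j \<Longrightarrow> s = 1 \<or> s = -1 \<Longrightarrow> t = 1 \<or> t = -1 \<Longrightarrow>
    s *\<^sub>R axis i 1 + t *\<^sub>R axis j 1 \<in> (rootsB :: (real^'n) set)"
  unfolding rootsB_def by blast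

lemma inner_self_long_rootsB:
  "(i :: 'n::finite) \<noteq> j \<Longrightarrow> s = 1 \<or> s = -1 \<Longrightarrow> t = 1 \<or> t = -1 \<Longrightarrow>
    (s *\<^sub>R axis i 1 + t *\<^sub>R axis j 1) \<bullet> (s *\<^sub>R axis i 1 + t *\<^sub>R axis j (1::real)) = 2"
  by (auto simp: inner_axis_axis algebra_simps)

lemma inner_self_rootsB: "v \<in> (rootsB :: (real^'n) set) \<Longrightarrow> v \<bullet> v = 1 \<or> v \<bullet> v = 2"
  unfolding rootsB_def by (auto simp: inner_axis_axis algebra_simps)

lemma inner_rootsB_Ints: "u \<in> (rootsB :: (real^'n) set) \<Longrightarrow> v \<in> rootsB \<Longrightarrow> u \<bullet> v \<in> \<int>"
  unfolding rootsB_def by (auto simp: inner_axis_axis algebra_simps)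

lemma uminus_rootsB:
  assumes "v \<in> (rootsB :: (real^'n) set)"
  shows "- v \<in> rootsB"
  using assms
proof (cases rule: rootsB_cases)
  case (short i r)
  then show ?thesis using short_rootsB_mem[of "- r" i] by auto
next
  case (long i j s t)
  then show ?thesis using long_rootsB_mem[OF long(1), of "- s" "- t"] by auto
qed

lemma finite_rootsB: "finite (rootsB :: (real^'n) set)"
proof (rule finite_subset)
  show "(rootsB :: (real^'n) set) \<subseteq> (\<lambda>(i, r). r *\<^sub>R axis i 1) ` (UNIV \<times> {1, -1})
      \<union> (\<lambda>(i, j, s, t). s *\<^sub>R axis i 1 + t *\<^sub>R axis j 1) ` (UNIV \<times> UNIV \<times> {1, -1} \<times> {1, -1})"
    (is "_ \<subseteq> ?S")
  proof
    fix v :: "real^'n"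
    assume "v \<in> rootsB"
    then show "v \<in> ?S"
    proof (cases rule: rootsB_cases)
      case (short i r)
      then show ?thesis by (intro UnI1 image_eqI[of _ _ "(i, r)"]) auto
    next
      case (long i j s t)
      then show ?thesis by (intro UnI2 image_eqI[of _ _ "(i, j, s, t)"]) auto
    qed
  qed
qed simp

lemma ex_neq_if_card_ge_2: "CARD('n) \<ge> 2 \<Longrightarrow> \<exists>j :: 'n::finite. j \<noteq> k"
  by (metis card_2_iff' ex_card)

lemma long_rootB_iff:
  assumes "CARD('n) \<ge> 2"
  shows "long_rootB (v :: real^'n) \<longleftrightarrow> v \<in> rootsB \<and> v \<bullet> v = 2"
proof -
  obtain i j :: 'n where "i \<noteq> j" using ex_neq_if_card_ge_2[OF assms] by blast
  then have "axis i 1 + axis j 1 \<in> (rootsB :: (real^'n) set)"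
    and "(axis i 1 + axis j 1) \<bullet> (axis i 1 + axis j (1::real)) = 2"
    using long_rootsB_mem[of i j 1 1] inner_self_long_rootsB[of i j 1 1] by simp_all
  then show ?thesis
    unfolding long_rootB_def using inner_self_rootsB by fastforce
qed

lemma inner_eq_minus_one_if_add_rootsB:
  assumes "\<alpha> \<in> (rootsB :: (real^'n) set)" "\<alpha> \<bullet> \<alpha> = 2" "\<gamma> \<in> rootsB" "\<alpha> + \<gamma> \<in> rootsB"
  shows "\<alpha> \<bullet> \<gamma> = -1"
proof -
  obtain n :: int where n: "\<alpha> \<bullet> \<gamma> = n"
    using inner_rootsB_Ints[OF assms(1,3)] by (auto elim: Ints_cases)
  have "(\<alpha> + \<gamma>) \<bullet> (\<alpha> + \<gamma>) = 2 + 2 * n + \<gamma> \<bullet> \<gamma>"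
    using assms(2) n by (simp add: inner_add_left inner_add_right inner_commute)
  with inner_self_rootsB[OF assms(3)] inner_self_rootsB[OF assms(4)]
  have "real_of_int (2 * n + 1) \<in> {0, -1, -2}"
    by auto
  then have "n = -1" by auto
  then show ?thesis using n by simp
qed

lemma add_two_short_rootsB:
  assumes "\<alpha> \<in> (rootsB :: (real^'n) set)" "\<alpha> \<bullet> \<alpha> = 2" "\<gamma> \<in> rootsB" "\<gamma> \<bullet> \<gamma> = 1" "\<alpha> \<bullet> \<gamma> = -1"
  shows "\<alpha> + 2 *\<^sub>R \<gamma> \<in> rootsB"
proof -
  obtain k r where r: "r = 1 \<or> r = -1" and \<gamma>: "\<gamma> = r *\<^sub>R axis k (1::real)"
    using assms(3,4)
    by (cases rule: rootsB_cases) (auto simp: inner_self_long_rootsB)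
  obtain i j s t where ij: "i \<noteq> j" and s: "s = 1 \<or> s = -1" and t: "t = 1 \<or> t = -1"
    and \<alpha>: "\<alpha> = s *\<^sub>R axis i 1 + t *\<^sub>R axis j (1::real)"
    using assms(1,2) by (cases rule: rootsB_cases) (auto simp: inner_axis_axis)
  have "\<alpha> \<bullet> \<gamma> = r * ((if i = k then s else 0) + (if j = k then t else 0))"
    unfolding \<alpha> \<gamma> by (simp add: inner_add_left inner_axis_axis)
  then consider "k = i" "r = - s" | "k = j" "r = - t"
    using assms(5) ij r s t by (auto split: if_splits)
  then show ?thesis
  proof cases
    case 1
    then have "\<alpha> + 2 *\<^sub>R \<gamma> = (- s) *\<^sub>R axis i 1 + t *\<^sub>R axis j 1"
      unfolding \<alpha> \<gamma> by (auto simp: vec_eq_iff axis_def)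
    then show ?thesis using long_rootsB_mem[OF ij _ t, of "- s"] s by auto
  next
    case 2
    then have "\<alpha> + 2 *\<^sub>R \<gamma> = s *\<^sub>R axis i 1 + (- t) *\<^sub>R axis j 1"
      unfolding \<alpha> \<gamma> using ij by (auto simp: vec_eq_iff axis_def)
    then show ?thesis using long_rootsB_mem[OF ij s, of "- t"] t by auto
  qed
qed

text \<open>The witness is the reflection \<open>\<alpha> + (2 / (\<gamma>,\<gamma>)) \<gamma>\<close> of \<open>\<alpha>\<close> in \<open>\<gamma>\<close>.\<close>

lemma higher_long_rootB_if_add_rootsB:
  assumes "\<alpha> \<in> (rootsB :: (real^'n) set)" "\<alpha> \<bullet> \<alpha> = 2" "\<gamma> \<in> rootsB" "\<alpha> + \<gamma> \<in> rootsB"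
    and "\<gamma> \<bullet> w > 0"
  obtains \<delta> where "\<delta> \<in> rootsB" "\<delta> \<bullet> \<delta> = 2" "\<delta> \<bullet> \<gamma> \<noteq> 0" "\<delta> \<bullet> w > \<alpha> \<bullet> w"
proof -
  have \<alpha>\<gamma>: "\<alpha> \<bullet> \<gamma> = -1" using inner_eq_minus_one_if_add_rootsB[OF assms(1-4)] .
  from inner_self_rootsB[OF assms(3)] show ?thesis
  proof
    assume "\<gamma> \<bullet> \<gamma> = 1"
    with assms \<alpha>\<gamma> show ?thesis
      by (intro that[of "\<alpha> + 2 *\<^sub>R \<gamma>"] add_two_short_rootsB)
        (simp_all add: inner_add_left inner_add_right inner_commute)
  next
    assume "\<gamma> \<bullet> \<gamma> = 2"
    with assms \<alpha>\<gamma> show ?thesis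
      by (intro that[of "\<alpha> + \<gamma>"]) (simp_all add: inner_add_left inner_add_right inner_commute)
  qed
qed

lemma ex_long_rootsB_inner_neq_0:
  assumes "CARD('n) \<ge> 2" "\<beta> \<noteq> (0 :: real^'n)"
  obtains a where "a \<in> rootsB" "a \<bullet> a = 2" "a \<bullet> \<beta> \<noteq> 0"
proof -
  obtain k where k: "\<beta> $ k \<noteq> 0" using assms(2) by (auto simp: vec_eq_iff)
  obtain j where j: "j \<noteq> k" using ex_neq_if_card_ge_2[OF assms(1)] by blast
  define a1 where "a1 = axis k 1 + axis j (1::real)"
  define a2 where "a2 = axis k 1 - axis j (1::real)"
  have "a1 \<in> rootsB" "a2 \<in> rootsB" "a1 \<bullet> a1 = 2" "a2 \<bullet> a2 = 2"
    unfolding a1_def a2_def using j long_rootsB_mem[of k j 1 1] long_rootsB_mem[of k j 1 "-1"]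
      inner_self_long_rootsB[of k j 1 1] inner_self_long_rootsB[of k j 1 "-1"]
    by auto
  moreover have "a1 \<bullet> \<beta> + a2 \<bullet> \<beta> = 2 * \<beta> $ k"
    unfolding a1_def a2_def by (simp add: inner_add_left inner_diff_left inner_axis')
  then have "a1 \<bullet> \<beta> \<noteq> 0 \<or> a2 \<bullet> \<beta> \<noteq> 0" using k by auto
  ultimately show ?thesis using that by blast
qed

lemma positive_systemB_cases:
  assumes "positive_systemB P"
  obtains w where "\<And>a. a \<in> rootsB \<Longrightarrow> a \<in> P \<or> - a \<in> P"
    and "\<And>a. a \<in> P \<longleftrightarrow> a \<in> rootsB \<and> a \<bullet> w > 0"
proof -
  obtain w where reg: "\<forall>a\<in>rootsB. a \<bullet> w \<noteq> 0" and P: "P = {a \<in> rootsB. a \<bullet> w > 0}"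
    using assms unfolding positive_systemB_def by blast
  have "a \<in> P \<or> - a \<in> P" if "a \<in> rootsB" for a
    using reg that uminus_rootsB[OF that] unfolding P by (auto simp: neq_iff)
  then show ?thesis using that P by blast
qed

lemma ex_positive_long_rootB_inner_neq_0:
  assumes "CARD('n) \<ge> 2" "positive_systemB P" "\<beta> \<in> P"
  obtains a :: "real^'n" where "a \<in> P" "a \<bullet> a = 2" "a \<bullet> \<beta> \<noteq> 0"
proof -
  obtain w where sign: "\<And>a. a \<in> rootsB \<Longrightarrow> a \<in> P \<or> - a \<in> P"
    and P: "\<And>a. a \<in> P \<longleftrightarrow> a \<in> rootsB \<and> a \<bullet> w > 0"
    using positive_systemB_cases[OF assms(2)] by blast
  have "\<beta> \<noteq> 0" using assms(3) P inner_self_rootsB by fastforce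
  then obtain a where "a \<in> rootsB" "a \<bullet> a = 2" "a \<bullet> \<beta> \<noteq> 0"
    using ex_long_rootsB_inner_neq_0[OF assms(1)] by blast
  with sign[of a] that[of a] that[of "- a"] show thesis by auto
qed

theorem lemma5p6:
  fixes P \<Delta> :: "(real^'n) set"
  assumes "CARD('n) \<ge> 2"
    and "positive_systemB P"
    and "\<Delta> \<subseteq> P" and "\<Delta> \<noteq> {}"
  shows "\<exists>\<alpha> \<beta>. \<alpha> \<in> P \<and> long_rootB \<alpha> \<and> \<beta> \<in> \<Delta>
            \<and> (\<forall>\<gamma>\<in>\<Delta>. \<alpha> + \<gamma> \<notin> rootsB) \<and> \<alpha> \<bullet> \<beta> \<noteq> 0"
proof -
  obtain w where P: "\<And>a. a \<in> P \<longleftrightarrow> a \<in> rootsB \<and> a \<bullet> w > 0"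
    using positive_systemB_cases[OF assms(2)] by blast
  define C where "C = {a \<in> P. a \<bullet> a = 2 \<and> (\<exists>\<beta>\<in>\<Delta>. a \<bullet> \<beta> \<noteq> 0)}"
  have "finite C" using finite_rootsB by (rule rev_finite_subset) (auto simp: C_def P)
  moreover have "C \<noteq> {}"
    using assms(3,4) ex_positive_long_rootB_inner_neq_0[OF assms(1,2)] unfolding C_def by blast
  ultimately obtain \<alpha> where \<alpha>: "\<alpha> \<in> C" and max: "\<And>x. x \<in> C \<Longrightarrow> x \<bullet> w \<le> \<alpha> \<bullet> w"
    using ex_is_arg_min_if_finite[of C "\<lambda>x. - (x \<bullet> w)"] unfolding is_arg_min_def by force
  have "\<alpha> + \<gamma> \<notin> rootsB" if \<gamma>: "\<gamma> \<in> \<Delta>" for \<gamma>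
  proof
    assume "\<alpha> + \<gamma> \<in> rootsB"
    moreover have "\<alpha> \<in> rootsB" "\<alpha> \<bullet> \<alpha> = 2" "\<alpha> \<bullet> w > 0" "\<gamma> \<in> rootsB" "\<gamma> \<bullet> w > 0"
      using \<alpha> \<gamma> assms(3) by (auto simp: C_def P)
    ultimately obtain \<delta> where "\<delta> \<in> rootsB" "\<delta> \<bullet> \<delta> = 2" "\<delta> \<bullet> \<gamma> \<noteq> 0" "\<delta> \<bullet> w > \<alpha> \<bullet> w"
      using higher_long_rootB_if_add_rootsB by blast
    with \<gamma> \<open>\<alpha> \<bullet> w > 0\<close> max[of \<delta>] show False unfolding C_def P by auto
  qed
  with \<alpha> show ?thesis by (auto simp: C_def P long_rootB_iff[OF assms(1)])
qed

end
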